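(* Let $\mathcal A,\mathcal B,\mathcal C,\mathcal D$ be collections. Suppose there is a map $\phi:(\bigcup\mathcal B)\times\omega\to\bigcup\mathcal A$ such that (1) for all $B\in\mathcal B$ and $n\in\omega$, $\{\phi(y,n):y\in B\}\in\mathcal A$; and (2) whenever $\{\phi(y_n,n):n\in\omega\}\in\mathcal C$ (with $y_n\in\bigcup\mathcal B$), then $\{y_n:n\in\omega\}\in\mathcal D$. Then $G_1(\mathcal A,\mathcal C)\le_{\mathrm{II}}G_1(\mathcal B,\mathcal D)$.
   Context: In $G_1(\mathcal E,\mathcal F)$, at each inning $n\in\omega$ One plays $E_n\in\mathcal E$ and Two picks $x_n\in E_n$; Two wins iff $\{x_n:n\in\omega\}\in\mathcal F$. A strategy for One maps finite sequences of Two's moves to moves; predetermined if it depends only on the inning number. A strategy for Two maps finite sequences of One's moves to an element of the last one; Markov if it depends only on One's last move and the inning number. $G\le_{\mathrm{II}}H$ means: (1) a winning Markov strategy for Two in $G$ implies one in $H$; (2) a winning strategy for Two in $G$ implies one in $H$; (3) if One has no winning strategy in $G$ then One has none in $H$; (4) if One has no winning predetermined strategy in $G$ then One has none in $H$. *)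

theory Defs
  imports Main
begin

text \<open>The selection game G_1(E,F). One's moves are elements of E (sets of 'a),
Two's moves are elements of 'a. Innings are indexed by nat (omega).\<close>

definition one_strategy :: "'a set set \<Rightarrow> ('a list \<Rightarrow> 'a set) \<Rightarrow> bool" where
  "one_strategy E \<sigma> \<longleftrightarrow> (\<forall>s. \<sigma> s \<in> E)"

definition one_predetermined :: "('a list \<Rightarrow> 'a set) \<Rightarrow> bool" where
  "one_predetermined \<sigma> \<longleftrightarrow> (\<forall>s t. length s = length t \<longrightarrow> \<sigma> s = \<sigma> t)"

definition one_winning :: "'a set set \<Rightarrow> 'a set set \<Rightarrow> ('a list \<Rightarrow> 'a set) \<Rightarrow> bool" where
  "one_winning E F \<sigma> \<longleftrightarrow>
     one_strategy E \<sigma> \<and>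
     (\<forall>x :: nat \<Rightarrow> 'a. (\<forall>n. x n \<in> \<sigma> (map x [0..<n])) \<longrightarrow> range x \<notin> F)"

definition two_strategy :: "'a set set \<Rightarrow> ('a set list \<Rightarrow> 'a) \<Rightarrow> bool" where
  "two_strategy E \<tau> \<longleftrightarrow>
     (\<forall>s. s \<noteq> [] \<longrightarrow> set s \<subseteq> E \<longrightarrow> \<tau> s \<in> last s)"

definition two_markov :: "('a set list \<Rightarrow> 'a) \<Rightarrow> bool" where
  "two_markov \<tau> \<longleftrightarrow>
     (\<forall>s t. s \<noteq> [] \<longrightarrow> t \<noteq> [] \<longrightarrow> length s = length t \<longrightarrow> last s = last t
        \<longrightarrow> \<tau> s = \<tau> t)"

definition two_winning :: "'a set set \<Rightarrow> 'a set set \<Rightarrow> ('a set list \<Rightarrow> 'a) \<Rightarrow> bool" where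
  "two_winning E F \<tau> \<longleftrightarrow>
     two_strategy E \<tau> \<and>
     (\<forall>A :: nat \<Rightarrow> 'a set. (\<forall>n. A n \<in> E) \<longrightarrow>
        range (\<lambda>n. \<tau> (map A [0..<Suc n])) \<in> F)"

definition II_markov_wins :: "'a set set \<Rightarrow> 'a set set \<Rightarrow> bool" where
  "II_markov_wins E F \<longleftrightarrow> (\<exists>\<tau>. two_markov \<tau> \<and> two_winning E F \<tau>)"

definition II_wins :: "'a set set \<Rightarrow> 'a set set \<Rightarrow> bool" where
  "II_wins E F \<longleftrightarrow> (\<exists>\<tau>. two_winning E F \<tau>)"

definition I_wins :: "'a set set \<Rightarrow> 'a set set \<Rightarrow> bool" where
  "I_wins E F \<longleftrightarrow> (\<exists>\<sigma>. one_winning E F \<sigma>)"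

definition I_pre_wins :: "'a set set \<Rightarrow> 'a set set \<Rightarrow> bool" where
  "I_pre_wins E F \<longleftrightarrow> (\<exists>\<sigma>. one_predetermined \<sigma> \<and> one_winning E F \<sigma>)"

definition G1_le_II :: "'a set set \<Rightarrow> 'a set set \<Rightarrow> 'b set set \<Rightarrow> 'b set set \<Rightarrow> bool" where
  "G1_le_II A C B D \<longleftrightarrow>
     (II_markov_wins A C \<longrightarrow> II_markov_wins B D) \<and>
     (II_wins A C \<longrightarrow> II_wins B D) \<and>
     (\<not> I_wins A C \<longrightarrow> \<not> I_wins B D) \<and>
     (\<not> I_pre_wins A C \<longrightarrow> \<not> I_pre_wins B D)"

end

theory Submission
  imports Defs
begin

text \<open>Strategies transfer along \<open>\<phi>\<close> in opposite directions for the two players.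
  A strategy of Two in \<open>G\<^sub>1(\<A>,\<C>)\<close> is pulled back: when One plays \<open>B\<^sub>n \<in> \<B>\<close>, Two
  feeds the images \<open>\<phi>[B\<^sub>k, k]\<close> (\<open>k \<le> n\<close>) to the given strategy and answers with a
  preimage in \<open>B\<^sub>n\<close> of its reply; by (2) the answers form a set in \<open>\<D>\<close>.
  A strategy \<open>\<sigma>\<close> of One in \<open>G\<^sub>1(\<B>,\<D>)\<close> is pushed forward: every answer \<open>x\<^sub>n\<close> of Two is
  lifted to a preimage \<open>y\<^sub>n\<close> in \<open>\<sigma>\<close>'s current move, and One plays the image under
  \<open>\<phi>(-, n)\<close> of \<open>\<sigma>\<close>'s reply to the lifted history; if Two won, (2) would make the lifted
  play a win against \<open>\<sigma>\<close>. Both constructions keep the dependence on the history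
  (last move and length, resp. length only), so Markov and predetermined strategies
  are preserved.\<close>

definition image_moves :: "('b \<Rightarrow> nat \<Rightarrow> 'a) \<Rightarrow> 'b set list \<Rightarrow> 'a set list" where
  "image_moves \<phi> s = map (\<lambda>k. (\<lambda>y. \<phi> y k) ` (s ! k)) [0..<length s]"

definition pullback_two :: "('a set list \<Rightarrow> 'a) \<Rightarrow> ('b \<Rightarrow> nat \<Rightarrow> 'a) \<Rightarrow> 'b set list \<Rightarrow> 'b" where
  "pullback_two \<tau> \<phi> s = (SOME y. y \<in> last s \<and> \<phi> y (length s - 1) = \<tau> (image_moves \<phi> s))"

lemma image_moves_map:
  "image_moves \<phi> (map B [0..<n]) = map (\<lambda>k. (\<lambda>y. \<phi> y k) ` B k) [0..<n]"
  unfolding image_moves_def by (rule nth_equalityI) auto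

lemma image_moves_last:
  "s \<noteq> [] \<Longrightarrow> last (image_moves \<phi> s) = (\<lambda>y. \<phi> y (length s - 1)) ` last s"
  unfolding image_moves_def by (simp add: last_map last_conv_nth)

lemma two_markov_pullback_two:
  assumes "two_markov \<tau>"
  shows "two_markov (pullback_two \<tau> \<phi>)"
  unfolding two_markov_def
proof (intro allI impI)
  fix s t :: "'b set list"
  assume st: "s \<noteq> []" "t \<noteq> []" "length s = length t" "last s = last t"
  then have "image_moves \<phi> s \<noteq> []" "image_moves \<phi> t \<noteq> []"
    "length (image_moves \<phi> s) = length (image_moves \<phi> t)"
    by (simp_all add: image_moves_def)
  moreover have "last (image_moves \<phi> s) = last (image_moves \<phi> t)"
    using st by (simp add: image_moves_last)
  ultimately have "\<tau> (image_moves \<phi> s) = \<tau> (image_moves \<phi> t)"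
    using assms unfolding two_markov_def by blast
  with st show "pullback_two \<tau> \<phi> s = pullback_two \<tau> \<phi> t"
    by (simp add: pullback_two_def)
qed

lemma pullback_two_preimage:
  assumes h1: "\<forall>B\<in>\<B>. \<forall>n. (\<lambda>y. \<phi> y n) ` B \<in> \<A>"
    and \<tau>: "two_strategy \<A> \<tau>" and s: "s \<noteq> []" "set s \<subseteq> \<B>"
  shows "pullback_two \<tau> \<phi> s \<in> last s
    \<and> \<phi> (pullback_two \<tau> \<phi> s) (length s - 1) = \<tau> (image_moves \<phi> s)"
proof -
  have "image_moves \<phi> s \<noteq> []" "set (image_moves \<phi> s) \<subseteq> \<A>"
    using s h1 by (auto simp: image_moves_def dest!: nth_mem)
  then have "\<tau> (image_moves \<phi> s) \<in> (\<lambda>y. \<phi> y (length s - 1)) ` last s"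
    using \<tau> image_moves_last[OF s(1)] unfolding two_strategy_def by metis
  then have "\<exists>y. y \<in> last s \<and> \<phi> y (length s - 1) = \<tau> (image_moves \<phi> s)"
    by auto
  then show ?thesis
    unfolding pullback_two_def by (rule someI_ex)
qed

lemma two_winning_pullback_two:
  assumes h1: "\<forall>B\<in>\<B>. \<forall>n. (\<lambda>y. \<phi> y n) ` B \<in> \<A>"
    and h2: "\<forall>y :: nat \<Rightarrow> 'b. (\<forall>n. y n \<in> \<Union>\<B>) \<longrightarrow>
               range (\<lambda>n. \<phi> (y n) n) \<in> \<C> \<longrightarrow> range y \<in> \<D>"
    and \<tau>: "two_winning \<A> \<C> \<tau>"
  shows "two_winning \<B> \<D> (pullback_two \<tau> \<phi>)"
proof -
  have strategy: "two_strategy \<A> \<tau>"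
    using \<tau> unfolding two_winning_def by blast
  note preimage = pullback_two_preimage[OF h1 strategy]
  show ?thesis
    unfolding two_winning_def two_strategy_def
  proof (intro conjI allI impI)
    fix s :: "'b set list"
    assume "s \<noteq> []" "set s \<subseteq> \<B>"
    then show "pullback_two \<tau> \<phi> s \<in> last s"
      using preimage by blast
  next
    fix B :: "nat \<Rightarrow> 'b set"
    assume B: "\<forall>n. B n \<in> \<B>"
    define A where "A n = (\<lambda>y. \<phi> y n) ` B n" for n
    define y where "y n = pullback_two \<tau> \<phi> (map B [0..<Suc n])" for n
    have "\<forall>n. A n \<in> \<A>"
      using B h1 by (simp add: A_def)
    then have A_won: "range (\<lambda>n. \<tau> (map A [0..<Suc n])) \<in> \<C>"
      using \<tau> unfolding two_winning_def by blast
    have y: "y n \<in> B n \<and> \<phi> (y n) n = \<tau> (map A [0..<Suc n])" for n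
      using preimage[of "map B [0..<Suc n]"] B
      by (auto simp: y_def image_moves_map A_def[abs_def] last_map simp del: upt_Suc)
    have "range (\<lambda>n. \<phi> (y n) n) \<in> \<C>"
      using y A_won by simp
    moreover have "\<forall>n. y n \<in> \<Union>\<B>"
      using y B by blast
    ultimately have "range y \<in> \<D>"
      using h2 by blast
    then show "range (\<lambda>n. pullback_two \<tau> \<phi> (map B [0..<Suc n])) \<in> \<D>"
      by (simp add: y_def)
  qed
qed

text \<open>The lifted history is built on the reversed history, newest move first, so that
  each lifted move can be chosen inside \<open>\<sigma>\<close>'s reply to the earlier lifted moves.\<close>

fun lift_history_rev :: "('b list \<Rightarrow> 'b set) \<Rightarrow> ('b \<Rightarrow> nat \<Rightarrow> 'a) \<Rightarrow> 'a list \<Rightarrow> 'b list" where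
  "lift_history_rev \<sigma> \<phi> [] = []"
| "lift_history_rev \<sigma> \<phi> (x # xs) =
     (SOME y. y \<in> \<sigma> (rev (lift_history_rev \<sigma> \<phi> xs)) \<and> \<phi> y (length xs) = x)
     # lift_history_rev \<sigma> \<phi> xs"

definition pushforward_one :: "('b list \<Rightarrow> 'b set) \<Rightarrow> ('b \<Rightarrow> nat \<Rightarrow> 'a) \<Rightarrow> 'a list \<Rightarrow> 'a set" where
  "pushforward_one \<sigma> \<phi> xs = (\<lambda>y. \<phi> y (length xs)) ` \<sigma> (rev (lift_history_rev \<sigma> \<phi> (rev xs)))"

definition lift_play :: "('b list \<Rightarrow> 'b set) \<Rightarrow> ('b \<Rightarrow> nat \<Rightarrow> 'a) \<Rightarrow> (nat \<Rightarrow> 'a) \<Rightarrow> nat \<Rightarrow> 'b" where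
  "lift_play \<sigma> \<phi> x n = hd (lift_history_rev \<sigma> \<phi> (rev (map x [0..<Suc n])))"

lemma length_lift_history_rev [simp]: "length (lift_history_rev \<sigma> \<phi> xs) = length xs"
  by (induction xs) auto

lemma lift_history_rev_map:
  "rev (lift_history_rev \<sigma> \<phi> (rev (map x [0..<n]))) = map (lift_play \<sigma> \<phi> x) [0..<n]"
  by (induction n) (simp_all add: lift_play_def)

lemma one_predetermined_pushforward_one:
  assumes "one_predetermined \<sigma>"
  shows "one_predetermined (pushforward_one \<sigma> \<phi>)"
  using assms unfolding one_predetermined_def pushforward_one_def
  by (metis length_rev length_lift_history_rev)

lemma lift_play_preimage:
  assumes "\<forall>n. x n \<in> pushforward_one \<sigma> \<phi> (map x [0..<n])"
  shows "lift_play \<sigma> \<phi> x n \<in> \<sigma> (map (lift_play \<sigma> \<phi> x) [0..<n])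
    \<and> \<phi> (lift_play \<sigma> \<phi> x n) n = x n"
proof -
  let ?h = "rev (lift_history_rev \<sigma> \<phi> (rev (map x [0..<n])))"
  have "\<exists>y. y \<in> \<sigma> ?h \<and> \<phi> y n = x n"
    using assms unfolding pushforward_one_def by force
  then have "(SOME y. y \<in> \<sigma> ?h \<and> \<phi> y n = x n) \<in> \<sigma> ?h
      \<and> \<phi> (SOME y. y \<in> \<sigma> ?h \<and> \<phi> y n = x n) n = x n"
    by (rule someI_ex)
  then show ?thesis
    by (simp add: lift_play_def flip: lift_history_rev_map)
qed

lemma one_winning_pushforward_one:
  assumes h1: "\<forall>B\<in>\<B>. \<forall>n. (\<lambda>y. \<phi> y n) ` B \<in> \<A>"
    and h2: "\<forall>y :: nat \<Rightarrow> 'b. (\<forall>n. y n \<in> \<Union>\<B>) \<longrightarrow>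
               range (\<lambda>n. \<phi> (y n) n) \<in> \<C> \<longrightarrow> range y \<in> \<D>"
    and \<sigma>: "one_winning \<B> \<D> \<sigma>"
  shows "one_winning \<A> \<C> (pushforward_one \<sigma> \<phi>)"
  unfolding one_winning_def one_strategy_def
proof (intro conjI allI impI)
  have moves: "\<sigma> s \<in> \<B>" for s
    using \<sigma> unfolding one_winning_def one_strategy_def by blast
  then show "pushforward_one \<sigma> \<phi> s \<in> \<A>" for s
    using h1 unfolding pushforward_one_def by blast
  fix x :: "nat \<Rightarrow> 'a"
  assume "\<forall>n. x n \<in> pushforward_one \<sigma> \<phi> (map x [0..<n])"
  note lifted = lift_play_preimage[OF this]
  then have "range (lift_play \<sigma> \<phi> x) \<notin> \<D>"
    using \<sigma> unfolding one_winning_def by blast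
  moreover have "\<forall>n. lift_play \<sigma> \<phi> x n \<in> \<Union>\<B>"
    using lifted moves by blast
  moreover have "range (\<lambda>n. \<phi> (lift_play \<sigma> \<phi> x n) n) = range x"
    using lifted by simp
  ultimately show "range x \<notin> \<C>"
    using h2 by metis
qed

theorem mainTheorem8:
  fixes \<A> \<C> :: "'a set set" and \<B> \<D> :: "'b set set"
    and \<phi> :: "'b \<Rightarrow> nat \<Rightarrow> 'a"
  assumes maps: "\<forall>y\<in>\<Union>\<B>. \<forall>n. \<phi> y n \<in> \<Union>\<A>"
    and h1: "\<forall>B\<in>\<B>. \<forall>n. (\<lambda>y. \<phi> y n) ` B \<in> \<A>"
    and h2: "\<forall>y :: nat \<Rightarrow> 'b. (\<forall>n. y n \<in> \<Union>\<B>) \<longrightarrow>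
               range (\<lambda>n. \<phi> (y n) n) \<in> \<C> \<longrightarrow> range y \<in> \<D>"
  shows "G1_le_II \<A> \<C> \<B> \<D>"
  unfolding G1_le_II_def II_markov_wins_def II_wins_def I_wins_def I_pre_wins_def
  using two_winning_pullback_two[OF h1 h2] two_markov_pullback_two
    one_winning_pushforward_one[OF h1 h2] one_predetermined_pushforward_one
  by blast

end
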